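(* Let $g\ge1$, $n=g+1$, $B\in\mathbb Z^{g\times n}$ with $B_{i,1}=1$, $B_{i,i+1}=-1$ and other entries $0$, $Q=BB^T$, and let $k\in\{1,\dots,g\}$ and $\mathbf a\in[\mathbf k]$. Then the Delaunay set $\mathcal D_{\mathbf a,Q}$ is in bijection with the set $[\mathbf k]$ and with the set $\mathcal B_{\mathbf a,v_1}$ of bases of the matroid $\mathcal M_{\mathbf a,v_1}$.
   Context: $V_Q=\{\mathbf a\in\mathbb R^g:\ \mathbf a^TQ\mathbf a\le(\mathbf a-\mathbf c)^TQ(\mathbf a-\mathbf c)\ \forall\mathbf c\in\mathbb Z^g\}$ is the Voronoi polytope of the genus-$g$ banana graph (two vertices $v_1,v_2$ joined by $n$ edges). $[\mathbf k]\subset\mathbb R^g$ is the set of vectors with entries in $\{-\tfrac{k}{g+1},\tfrac{g+1-k}{g+1}\}$ having $k$ or $k-1$ entries equal to $\tfrac{g+1-k}{g+1}$ (these are vertices of $V_Q$). $\mathcal D_{\mathbf a,Q}=\{\mathbf c\in\mathbb Z^g:\mathbf a^TQ\mathbf a=(\mathbf a-\mathbf c)^TQ(\mathbf a-\mathbf c)\}$. Let $\mathbf s_{\mathbf a}\in\{0,1\}^n$ have $j$-th entry $0$ if $(B^T\mathbf a)_j>0$ and $1$ if $(B^T\mathbf a)_j<0$. The matroid $\mathcal M_{\mathbf a,v_1}$ on ground set $[n]$ has bases $\mathcal B_{\mathbf a,v_1}=\{I\subset[n],|I|=k:\ \exists\mathbf c\in\mathcal D_{\mathbf a,Q}\text{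 with }(B^T\mathbf c+\mathbf s_{\mathbf a})_i=1\ \forall i\in I\}$. *)

theory Defs
  imports Complex_Main
begin

text \<open>Conventions: indices are 0-based. Rows of B are 0..<g, columns (edges) are 0..<n with n = g+1.
 Paper's column 1 is our column 0, paper's column i+1 (for row i) is our column i+1 for row i (0-based).
 Vectors in R^g / Z^g are functions nat => real / nat => int that vanish outside {0..<g}.\<close>

definition bmat :: "nat \<Rightarrow> nat \<Rightarrow> int" where
  "bmat i j = (if j = 0 then 1 else if j = i + 1 then -1 else 0)"

definition qmat :: "nat \<Rightarrow> nat \<Rightarrow> nat \<Rightarrow> int" where
  "qmat g i j = (\<Sum>l<g+1. bmat i l * bmat j l)"

definition qform :: "nat \<Rightarrow> (nat \<Rightarrow> real) \<Rightarrow> real" where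
  "qform g x = (\<Sum>i<g. \<Sum>j<g. x i * of_int (qmat g i j) * x j)"

definition BTmul :: "nat \<Rightarrow> (nat \<Rightarrow> 'a::comm_ring_1) \<Rightarrow> nat \<Rightarrow> 'a" where
  "BTmul g x j = (\<Sum>i<g. of_int (bmat i j) * x i)"

definition realvecs :: "nat \<Rightarrow> (nat \<Rightarrow> real) set" where
  "realvecs g = {x. \<forall>i\<ge>g. x i = 0}"

definition intvecs :: "nat \<Rightarrow> (nat \<Rightarrow> int) set" where
  "intvecs g = {c. \<forall>i\<ge>g. c i = 0}"

definition kset :: "nat \<Rightarrow> nat \<Rightarrow> (nat \<Rightarrow> real) set" where
  "kset g k = {a \<in> realvecs g.
     (\<forall>i<g. a i = - (real k / real (g+1)) \<or> a i = real (g+1-k) / real (g+1)) \<and>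
     (card {i. i < g \<and> a i = real (g+1-k) / real (g+1)} = k \<or>
      card {i. i < g \<and> a i = real (g+1-k) / real (g+1)} = k - 1)}"

definition delaunay :: "nat \<Rightarrow> (nat \<Rightarrow> real) \<Rightarrow> (nat \<Rightarrow> int) set" where
  "delaunay g a = {c \<in> intvecs g.
     qform g a = qform g (\<lambda>i. a i - of_int (c i))}"

text \<open>s_a (value at zero entries is irrelevant: for a in [k], B^T a has no zero entry).\<close>
definition svec :: "nat \<Rightarrow> (nat \<Rightarrow> real) \<Rightarrow> nat \<Rightarrow> int" where
  "svec g a j = (if BTmul g a j > 0 then 0 else 1)"

definition bases :: "nat \<Rightarrow> nat \<Rightarrow> (nat \<Rightarrow> real) \<Rightarrow> nat set set" where
  "bases g k a = {I. I \<subseteq> {..<g+1} \<and> card I = k \<and>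
     (\<exists>c \<in> delaunay g a. \<forall>i\<in>I. BTmul g c i + svec g a i = 1)}"

end

theory Submission
  imports Defs
begin

text \<open>
  Since \<open>Q = B B\<^sup>T\<close>, the form \<open>x\<^sup>T Q x\<close> is \<open>|B\<^sup>T x|\<^sup>2\<close>; moreover \<open>B\<^sup>T\<close> is
  injective and the entries of \<open>B\<^sup>T x\<close> sum to zero. With \<open>t = k/(g+1)\<close>, the set \<open>[k]\<close>
  consists exactly of the \<open>a\<close> for which every entry of \<open>B\<^sup>T a\<close> is \<open>t\<close> or \<open>t - 1\<close>;
  then exactly \<open>k\<close> entries are negative. For an integer vector \<open>c\<close> put \<open>z = B\<^sup>T c\<close>;
  since \<open>\<Sum> z = 0\<close>, the square \<open>|B\<^sup>T a - z|\<^sup>2\<close> exceeds \<open>|B\<^sup>T a|\<^sup>2\<close> by a sum of the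
  nonnegative integers \<open>z\<^sub>j (z\<^sub>j \<plusminus> 1)\<close>, which vanishes iff all entries of
  \<open>B\<^sup>T a - z\<close> are again \<open>t\<close> or \<open>t - 1\<close>. Hence \<open>c\<close> is a Delaunay point iff
  \<open>a - c \<in> [k]\<close>, and \<open>c \<mapsto> a - c\<close> is the first bijection. A vertex in \<open>[k]\<close> is
  determined by its \<open>k\<close> negative edges, and for \<open>c\<close> in the Delaunay set these are exactly
  the edges where \<open>B\<^sup>T c + s\<^sub>a = 1\<close>, the basis belonging to \<open>c\<close>.
\<close>

lemma BTmul_0: "BTmul g x 0 = (\<Sum>i<g. x i)"
  unfolding BTmul_def bmat_def by simp

lemma BTmul_Suc: "i < g \<Longrightarrow> BTmul g x (Suc i) = - x i"
  unfolding BTmul_def bmat_def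
  by (simp add: if_distrib[of of_int] if_distrib[of "\<lambda>b. b * x _"] cong: if_cong)

lemma sum_BTmul_eq_0: "(\<Sum>j<g+1. BTmul g x j) = 0"
  by (simp only: sum.lessThan_Suc_shift Suc_eq_plus1[symmetric])
    (simp add: BTmul_0 BTmul_Suc sum_negf)

lemma BTmul_diff: "BTmul g (\<lambda>i. x i - y i) j = BTmul g x j - BTmul g y j"
  unfolding BTmul_def by (simp add: sum_subtractf algebra_simps)

lemma BTmul_of_int: "BTmul g (\<lambda>i. of_int (c i)) j = of_int (BTmul g c j)"
  unfolding BTmul_def by simp

lemma qmat_eq: "i < g \<Longrightarrow> j < g \<Longrightarrow> qmat g i j = 1 + of_bool (i = j)"
  unfolding qmat_def
  by (simp only: sum.lessThan_Suc_shift Suc_eq_plus1[symmetric])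
    (auto simp: bmat_def if_distrib[of "\<lambda>b. b * _"] cong: if_cong)

lemma qform_eq_sum_BTmul_sq: "qform g x = (\<Sum>j<g+1. (BTmul g x j)\<^sup>2)"
proof -
  have "qform g x = (\<Sum>i<g. \<Sum>j<g. x i * x j + (if i = j then x i * x j else 0))"
    unfolding qform_def by (intro sum.cong refl) (simp add: qmat_eq distrib_left distrib_right)
  also have "\<dots> = (\<Sum>i<g. x i)\<^sup>2 + (\<Sum>i<g. (x i)\<^sup>2)"
    by (simp add: sum.distrib power2_eq_square sum_product)
  also have "\<dots> = (\<Sum>j<g+1. (BTmul g x j)\<^sup>2)"
    by (simp only: sum.lessThan_Suc_shift Suc_eq_plus1[symmetric]) (simp add: BTmul_0 BTmul_Suc)
  finally show ?thesis .
qed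

lemma BTmul_eq_imp_eq:
  assumes "x \<in> realvecs g" "y \<in> realvecs g" "\<forall>j<g+1. BTmul g x j = BTmul g y j"
  shows "x = y"
proof
  fix i
  show "x i = y i"
  proof (cases "i < g")
    case True
    then show ?thesis using assms(3)[rule_format, of "Suc i"] by (simp add: BTmul_Suc)
  qed (use assms(1,2) in \<open>auto simp: realvecs_def\<close>)
qed

lemma sum_two_valued:
  fixes w :: "'b \<Rightarrow> 'a::ring_1"
  assumes "finite A" "\<forall>j\<in>A. w j = s \<or> w j = s + 1"
  shows "sum w A = of_nat (card A) * s + of_nat (card {j\<in>A. w j = s + 1})"
proof -
  have "sum w A = (\<Sum>j\<in>A. s + of_bool (w j = s + 1))"
    using assms(2) by (intro sum.cong) auto
  then show ?thesis using assms(1) by (simp add: sum.distrib Int_def)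
qed

definition kfrac :: "nat \<Rightarrow> nat \<Rightarrow> real" where
  "kfrac g k = real k / real (g + 1)"

lemma kset_eq:
  assumes "k \<le> g + 1"
  shows "kset g k = {a \<in> realvecs g. (\<forall>i<g. a i = - kfrac g k \<or> a i = 1 - kfrac g k) \<and>
     (card {i\<in>{..<g}. a i = 1 - kfrac g k} = k \<or> card {i\<in>{..<g}. a i = 1 - kfrac g k} = k - 1)}"
proof -
  have "real (g + 1 - k) / real (g + 1) = 1 - kfrac g k"
    using assms by (simp add: kfrac_def of_nat_diff field_simps)
  then show ?thesis unfolding kset_def kfrac_def lessThan_iff by simp
qed

lemma kset_iff:
  assumes "1 \<le> k" "k \<le> g + 1"
  shows "a \<in> kset g k \<longleftrightarrow>
    a \<in> realvecs g \<and> (\<forall>j<g+1. BTmul g a j = kfrac g k \<or> BTmul g a j = kfrac g k - 1)"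
proof -
  define t where "t = kfrac g k"
  define P where "P = {i\<in>{..<g}. a i = 1 - t}"
  have tail_iff: "(\<forall>i<g. a i = - t \<or> a i = 1 - t) \<longleftrightarrow>
      (\<forall>i<g. BTmul g a (Suc i) = t \<or> BTmul g a (Suc i) = t - 1)"
    by (auto simp: BTmul_Suc)
  have head_iff: "BTmul g a 0 = t \<or> BTmul g a 0 = t - 1 \<longleftrightarrow> card P = k \<or> card P = k - 1"
    if "\<forall>i<g. a i = - t \<or> a i = 1 - t"
  proof -
    have "BTmul g a 0 = real (card P) - real g * t"
      using sum_two_valued[of "{..<g}" a "- t"] that unfolding BTmul_0 P_def by simp
    moreover have "real k = real (g + 1) * t"
      unfolding t_def kfrac_def by simp
    ultimately show ?thesis using assms(1) by (auto simp: algebra_simps)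
  qed
  have "a \<in> kset g k \<longleftrightarrow>
      a \<in> realvecs g \<and> (\<forall>i<g. a i = - t \<or> a i = 1 - t) \<and> (card P = k \<or> card P = k - 1)"
    unfolding kset_eq[OF assms(2)] t_def P_def by simp
  also have "\<dots> \<longleftrightarrow> a \<in> realvecs g \<and> (\<forall>j<Suc g. BTmul g a j = t \<or> BTmul g a j = t - 1)"
    unfolding All_less_Suc2 using tail_iff head_iff by blast
  finally show ?thesis by (simp add: t_def)
qed

lemma kfrac_bounds: "1 \<le> k \<Longrightarrow> k \<le> g \<Longrightarrow> 0 < kfrac g k \<and> kfrac g k < 1"
  by (simp add: kfrac_def)

definition neg_edges :: "nat \<Rightarrow> (nat \<Rightarrow> real) \<Rightarrow> nat set" where
  "neg_edges g x = {j\<in>{..<g+1}. BTmul g x j < 0}"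

lemma card_neg_edges:
  assumes "1 \<le> k" "k \<le> g" "a \<in> kset g k"
  shows "card (neg_edges g a) = k"
proof -
  define t where "t = kfrac g k"
  have vals: "\<forall>j<g+1. BTmul g a j = t \<or> BTmul g a j = t - 1"
    using assms kset_iff[of k g] unfolding t_def by simp
  have "neg_edges g a = {j\<in>{..<g+1}. - BTmul g a j = - t + 1}"
    using vals kfrac_bounds[OF assms(1,2)] unfolding neg_edges_def t_def by force
  moreover have "(\<Sum>j<g+1. - BTmul g a j) =
      of_nat (card {..<g+1}) * - t + of_nat (card {j\<in>{..<g+1}. - BTmul g a j = - t + 1})"
    by (rule sum_two_valued) (use vals in auto)
  moreover have "(\<Sum>j<g+1. - BTmul g a j) = 0"
    by (simp only: sum_negf sum_BTmul_eq_0)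
  ultimately have "real (card (neg_edges g a)) = real (g + 1) * t"
    by simp
  then show ?thesis unfolding t_def kfrac_def by simp
qed

lemma inj_on_neg_edges:
  assumes "1 \<le> k" "k \<le> g"
  shows "inj_on (neg_edges g) (kset g k)"
proof
  fix x y
  assume x: "x \<in> kset g k" and y: "y \<in> kset g k" and eq: "neg_edges g x = neg_edges g y"
  have "BTmul g x j = BTmul g y j" if "j < g + 1" for j
  proof -
    have "BTmul g x j < 0 \<longleftrightarrow> BTmul g y j < 0"
      using eq that unfolding neg_edges_def by blast
    then show ?thesis
      using x y that kset_iff[of k g] kfrac_bounds[OF assms] assms by force
  qed
  then show "x = y"
    using BTmul_eq_imp_eq x y kset_iff[of k g] assms by auto
qed

lemma sum_sq_diff_int_eq_iff:
  fixes w :: "'b \<Rightarrow> real" and z :: "'b \<Rightarrow> int"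
  assumes "finite A" "\<forall>j\<in>A. w j = t \<or> w j = t - 1" "sum z A = 0"
  shows "(\<Sum>j\<in>A. (w j - z j)\<^sup>2) = (\<Sum>j\<in>A. (w j)\<^sup>2) \<longleftrightarrow>
    (\<forall>j\<in>A. w j - z j = t \<or> w j - z j = t - 1)"
proof -
  define excess where "excess j = (w j - z j)\<^sup>2 - (w j)\<^sup>2 - (1 - 2 * t) * z j" for j
  have int_prod: "0 \<le> m * (m + d) \<and> (m * (m + d) = 0 \<longleftrightarrow> m = 0 \<or> m = - d)"
    if "d = 1 \<or> d = -1" for m d :: int
    using that by (auto simp: zero_le_mult_iff)
  have excess: "0 \<le> excess j \<and> (excess j = 0 \<longleftrightarrow> w j - z j = t \<or> w j - z j = t - 1)"
    if "j \<in> A" for j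
  proof -
    from assms(2) that have "w j = t \<or> w j = t - 1" by simp
    then show ?thesis
    proof
      assume w: "w j = t"
      then have excess_j: "excess j = of_int (z j * (z j + -1))"
        unfolding excess_def by (simp add: power2_eq_square algebra_simps)
      show ?thesis
        unfolding excess_j of_int_0_le_iff of_int_eq_0_iff
        using int_prod[of "-1" "z j"] w by auto
    next
      assume w: "w j = t - 1"
      then have excess_j: "excess j = of_int (z j * (z j + 1))"
        unfolding excess_def w by (simp add: power2_eq_square algebra_simps)
      show ?thesis
        unfolding excess_j of_int_0_le_iff of_int_eq_0_iff
        using int_prod[of 1 "z j"] w by auto
    qed
  qed
  have "(\<Sum>j\<in>A. (w j - z j)\<^sup>2) =
      (\<Sum>j\<in>A. (w j)\<^sup>2) + (1 - 2 * t) * of_int (sum z A) + sum excess A"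
    unfolding excess_def by (simp add: sum.distrib sum_subtractf sum_distrib_left)
  then have "(\<Sum>j\<in>A. (w j - z j)\<^sup>2) = (\<Sum>j\<in>A. (w j)\<^sup>2) + sum excess A"
    using assms(3) by simp
  moreover have "sum excess A = 0 \<longleftrightarrow> (\<forall>j\<in>A. excess j = 0)"
    using assms(1) excess by (simp add: sum_nonneg_eq_0_iff)
  ultimately show ?thesis using excess by auto
qed

lemma delaunay_iff:
  assumes "1 \<le> k" "k \<le> g + 1" "a \<in> kset g k"
  shows "c \<in> delaunay g a \<longleftrightarrow> c \<in> intvecs g \<and> (\<lambda>i. a i - of_int (c i)) \<in> kset g k"
proof -
  define t where "t = kfrac g k"
  let ?x = "\<lambda>i. a i - of_int (c i)"
  have vals: "\<forall>j\<in>{..<g+1}. BTmul g a j = t \<or> BTmul g a j = t - 1"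
    using assms kset_iff[of k g] unfolding t_def by simp
  have "qform g a = qform g ?x \<longleftrightarrow>
      (\<Sum>j<g+1. (BTmul g a j - BTmul g c j)\<^sup>2) = (\<Sum>j<g+1. (BTmul g a j)\<^sup>2)"
    by (auto simp: qform_eq_sum_BTmul_sq BTmul_diff BTmul_of_int)
  also have "\<dots> \<longleftrightarrow> (\<forall>j<g+1. BTmul g ?x j = t \<or> BTmul g ?x j = t - 1)"
    using sum_sq_diff_int_eq_iff[OF _ vals sum_BTmul_eq_0[of g c]]
    by (simp add: BTmul_diff BTmul_of_int Ball_def)
  finally have "c \<in> delaunay g a \<longleftrightarrow>
      c \<in> intvecs g \<and> (\<forall>j<g+1. BTmul g ?x j = t \<or> BTmul g ?x j = t - 1)"
    unfolding delaunay_def by simp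
  moreover have "c \<in> intvecs g \<Longrightarrow> ?x \<in> realvecs g"
    using assms(3) by (simp add: kset_def realvecs_def intvecs_def)
  ultimately show ?thesis
    using kset_iff[OF assms(1,2)] unfolding t_def by blast
qed

lemma bij_betw_delaunay_kset:
  assumes "1 \<le> k" "k \<le> g + 1" "a \<in> kset g k"
  shows "bij_betw (\<lambda>c i. a i - of_int (c i)) (delaunay g a) (kset g k)"
proof (rule bij_betw_imageI)
  show "inj_on (\<lambda>c i. a i - of_int (c i)) (delaunay g a)"
    by (auto intro!: inj_onI simp: fun_eq_iff)
  show "(\<lambda>c i. a i - of_int (c i)) ` delaunay g a = kset g k"
  proof (intro equalityI subsetI)
    fix x assume "x \<in> (\<lambda>c i. a i - of_int (c i)) ` delaunay g a"
    then show "x \<in> kset g k" using delaunay_iff[OF assms] by blast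
  next
    fix x assume x: "x \<in> kset g k"
    define c where "c i = \<lfloor>a i - x i\<rfloor>" for i
    have diff: "x i \<in> {a i - 1, a i, a i + 1}" for i
    proof (cases "i < g")
      case True
      then have "a i = - kfrac g k \<or> a i = 1 - kfrac g k"
        and "x i = - kfrac g k \<or> x i = 1 - kfrac g k"
        using assms(3) x unfolding kset_eq[OF assms(2)] by auto
      then show ?thesis by auto
    next
      case False
      then show ?thesis using assms(3) x by (simp add: kset_def realvecs_def)
    qed
    have a_minus_c: "(\<lambda>i. a i - of_int (c i)) = x"
    proof
      fix i
      show "a i - of_int (c i) = x i"
        using diff[of i] unfolding c_def by auto
    qed
    moreover have "c \<in> intvecs g"
      using assms(3) x unfolding c_def kset_def realvecs_def intvecs_def by simp
    ultimately have "c \<in> delaunay g a"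
      using delaunay_iff[OF assms] x by simp
    then show "x \<in> (\<lambda>c i. a i - of_int (c i)) ` delaunay g a"
      using a_minus_c by force
  qed
qed

lemma BTmul_add_svec_eq_1_iff:
  assumes "1 \<le> k" "k \<le> g" "a \<in> kset g k" "c \<in> delaunay g a" "j < g + 1"
  shows "BTmul g c j + svec g a j = 1 \<longleftrightarrow> j \<in> neg_edges g (\<lambda>i. a i - of_int (c i))"
proof -
  define t where "t = kfrac g k"
  have "(\<lambda>i. a i - of_int (c i)) \<in> kset g k"
    using delaunay_iff assms by auto
  then have "BTmul g a j - BTmul g c j = t \<or> BTmul g a j - BTmul g c j = t - 1"
    using assms kset_iff[of k g] unfolding t_def by (auto simp: BTmul_diff BTmul_of_int)
  moreover have "BTmul g a j = t \<or> BTmul g a j = t - 1"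
    using assms kset_iff[of k g] unfolding t_def by auto
  moreover have "0 < t" "t < 1"
    using kfrac_bounds[OF assms(1,2)] unfolding t_def by auto
  ultimately show ?thesis
    using assms(5) unfolding neg_edges_def svec_def by (auto simp: BTmul_diff BTmul_of_int)
qed

lemma bases_eq_image_neg_edges:
  assumes "1 \<le> k" "k \<le> g" "a \<in> kset g k"
  shows "bases g k a = neg_edges g ` kset g k"
proof (intro equalityI subsetI)
  fix I assume "I \<in> bases g k a"
  then obtain c where I: "I \<subseteq> {..<g+1}" "card I = k" and c: "c \<in> delaunay g a"
    and basis: "\<forall>i\<in>I. BTmul g c i + svec g a i = 1"
    unfolding bases_def by blast
  define x where "x = (\<lambda>i. a i - of_int (c i))"
  have x: "x \<in> kset g k"
    using delaunay_iff assms c unfolding x_def by auto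
  have "I \<subseteq> neg_edges g x"
    using I basis BTmul_add_svec_eq_1_iff[OF assms c] unfolding x_def by auto
  then have "I = neg_edges g x"
    using I card_neg_edges[OF assms(1,2) x] by (intro card_subset_eq) (auto simp: neg_edges_def)
  then show "I \<in> neg_edges g ` kset g k"
    using x by blast
next
  fix I assume "I \<in> neg_edges g ` kset g k"
  then obtain x where x: "x \<in> kset g k" and I: "I = neg_edges g x"
    by blast
  have "x \<in> (\<lambda>c i. a i - of_int (c i)) ` delaunay g a"
    using x bij_betw_imp_surj_on[OF bij_betw_delaunay_kset] assms by simp
  then obtain c where c: "c \<in> delaunay g a" and x_eq: "x = (\<lambda>i. a i - of_int (c i))"
    by blast
  have "card I = k"
    using I card_neg_edges[OF assms(1,2) x] by simp
  moreover have "\<forall>i\<in>I. BTmul g c i + svec g a i = 1"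
    using I x_eq BTmul_add_svec_eq_1_iff[OF assms c] by (auto simp: neg_edges_def)
  ultimately show "I \<in> bases g k a"
    using c unfolding bases_def I by (auto simp: neg_edges_def)
qed

theorem theorem3p12:
  fixes g k :: nat and a :: "nat \<Rightarrow> real"
  assumes "g \<ge> 1" and "1 \<le> k" and "k \<le> g" and "a \<in> kset g k"
  shows "(\<exists>f. bij_betw f (delaunay g a) (kset g k)) \<and>
         (\<exists>h. bij_betw h (delaunay g a) (bases g k a))"
proof -
  have "bij_betw (\<lambda>c i. a i - of_int (c i)) (delaunay g a) (kset g k)"
    using bij_betw_delaunay_kset assms by simp
  moreover have "bij_betw (neg_edges g) (kset g k) (bases g k a)"
    using inj_on_imp_bij_betw[OF inj_on_neg_edges] bases_eq_image_neg_edges assms by simp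
  ultimately show ?thesis
    using bij_betw_trans by blast
qed

end
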